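(* Let $k$ be a field, $V$ a $k$-vector space and $\varphi\in\operatorname{End}_k(V)$ a finite potent endomorphism with index $i(\varphi)=r$, and let $V=W_\varphi\oplus U_\varphi$ be the AST-decomposition of $V$ determined by $\varphi$. If $f\in\operatorname{End}_k(V)$ is an endomorphism such that $f\circ\varphi^{r}=\varphi^{r}\circ f$, then $W_\varphi$ and $U_\varphi$ are invariant under $f$.
   Context: An endomorphism $\varphi$ of a $k$-vector space $V$ is finite potent if $\varphi^n(V)$ is finite dimensional for some $n$. For such $\varphi$, the AST-decomposition is $V=U_\varphi\oplus W_\varphi$ where $U_\varphi=\{v\in V: \varphi^m(v)=0 \text{ for some } m\}$ and $W_\varphi=\{v\in V: p(\varphi)(v)=0 \text{ for some } p(x)\in k[x] \text{ coprime to } x\}$; both are $\varphi$-invariant, $\varphi|_{U_\varphi}$ is nilpotent, $W_\varphi$ is finite dimensional and $\varphi|_{W_\varphi}$ is an automorphism of $W_\varphi$. The index $i(\varphi)$ is the nilpotency order of $\varphi|_{U_\varphi}$, i.e. the smallest $r\ge 0$ with $(\varphi|_{U_\varphi})^r=0$. *)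

theory Defs
  imports Main "HOL-Computational_Algebra.Polynomial"
begin

text \<open>A k-vector space V is modelled as the type 'b with scalar multiplication
  scale :: 'a \<Rightarrow> 'b \<Rightarrow> 'b satisfying the locale vector_space (k = type 'a, a field).\<close>

definition fin_dim_subspace :: "('a::field \<Rightarrow> 'b::ab_group_add \<Rightarrow> 'b) \<Rightarrow> 'b set \<Rightarrow> bool" where
  "fin_dim_subspace scale S \<longleftrightarrow> (\<exists>B. finite B \<and> module.span scale B = S)"

definition finite_potent :: "('a::field \<Rightarrow> 'b::ab_group_add \<Rightarrow> 'b) \<Rightarrow> ('b \<Rightarrow> 'b) \<Rightarrow> bool" where
  "finite_potent scale \<phi> \<longleftrightarrow>
     Vector_Spaces.linear scale scale \<phi> \<and> (\<exists>n. fin_dim_subspace scale (range (\<phi> ^^ n)))"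

definition poly_endo :: "('a::field \<Rightarrow> 'b::ab_group_add \<Rightarrow> 'b) \<Rightarrow> 'a poly \<Rightarrow> ('b \<Rightarrow> 'b) \<Rightarrow> 'b \<Rightarrow> 'b" where
  "poly_endo scale p \<phi> v = (\<Sum>i\<le>degree p. scale (coeff p i) ((\<phi> ^^ i) v))"

definition AST_U :: "('b::ab_group_add \<Rightarrow> 'b) \<Rightarrow> 'b set" where
  "AST_U \<phi> = {v. \<exists>m. (\<phi> ^^ m) v = 0}"

definition AST_W :: "('a::field \<Rightarrow> 'b::ab_group_add \<Rightarrow> 'b) \<Rightarrow> ('b \<Rightarrow> 'b) \<Rightarrow> 'b set" where
  "AST_W scale \<phi> = {v. \<exists>p::'a poly. coprime p [:0, 1:] \<and> poly_endo scale p \<phi> v = 0}"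

definition AST_index :: "('b::ab_group_add \<Rightarrow> 'b) \<Rightarrow> nat" where
  "AST_index \<phi> = (LEAST r. \<forall>v\<in>AST_U \<phi>. (\<phi> ^^ r) v = 0)"

end

theory Submission
  imports Defs
begin

(* Annihilating each vector of a finite spanning set of phi^n(V) shows that a finite potent
   phi is killed by a nonzero polynomial, which factors as X^s g with g(0) ~= 0. Bezout
   identities a X^m + b p = 1 for polynomials p with p(0) ~= 0 then give U_phi = ker phi^r and
   W_phi = im phi^r for r = i(phi), and an endomorphism commuting with phi^r preserves both. *)

lemma bezout_X_power:
  fixes p :: "'a::field poly"
  assumes "coeff p 0 \<noteq> 0"
  shows "\<exists>a b. a * [:0, 1:] ^ m + b * p = 1"
proof -
  obtain p0 p1 where p: "p = pCons p0 p1" by (cases p)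
  with assms have p0: "p0 \<noteq> 0" by simp
  define c where "c = smult (- 1 / p0) p1"
  define d where "d = [:1 / p0:]"
  have cd: "c * [:0, 1:] + d * p = 1"
    using p0 by (simp add: c_def d_def p one_pCons)
  show ?thesis
  proof (induction m)
    case 0
    show ?case by (rule exI[of _ 1], rule exI[of _ 0]) simp
  next
    case (Suc m)
    then obtain a b where ab: "a * [:0, 1:] ^ m + b * p = 1" by blast
    have "1 = a * [:0, 1:] ^ m * (c * [:0, 1:] + d * p) + b * p"
      using ab cd by simp
    also have "\<dots> = (a * c) * [:0, 1:] ^ Suc m + (a * [:0, 1:] ^ m * d + b) * p"
      by (simp add: algebra_simps)
    finally have "(a * c) * [:0, 1:] ^ Suc m + (a * [:0, 1:] ^ m * d + b) * p = 1"
      by (rule sym)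
    then show ?case by blast
  qed
qed

lemma coprime_X_iff_coeff_0:
  fixes p :: "'a::field poly"
  shows "coprime p [:0, 1:] \<longleftrightarrow> coeff p 0 \<noteq> 0"
proof
  assume cop: "coprime p [:0, 1:]"
  show "coeff p 0 \<noteq> 0"
  proof
    assume "coeff p 0 = 0"
    then have "[:0, 1:] dvd p"
      using dvd_iff_poly_eq_0[of 0 p] by (simp add: poly_0_coeff_0)
    then have "is_unit ([:0, 1:] :: 'a poly)"
      using coprime_common_divisor[OF cop _ dvd_refl] by blast
    then show False by (simp add: is_unit_iff_degree)
  qed
next
  assume "coeff p 0 \<noteq> 0"
  then obtain a b where ab: "a * [:0, 1:] ^ 1 + b * p = 1"
    using bezout_X_power by blast
  show "coprime p [:0, 1:]"
  proof (rule coprimeI)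
    fix d
    assume "d dvd p" and "d dvd [:0, 1:]"
    then have "d dvd a * [:0, 1:] ^ 1 + b * p" by (intro dvd_add dvd_mult) simp_all
    then show "is_unit d" by (simp only: ab)
  qed
qed

context vector_space
begin

interpretation endo: vector_space_pair scale scale ..

lemma linear_funpow:
  assumes "Vector_Spaces.linear scale scale \<phi>"
  shows "Vector_Spaces.linear scale scale (\<phi> ^^ n)"
proof (induction n)
  case 0
  show ?case using linear_id by (simp add: id_def)
next
  case (Suc n)
  then show ?case
    using Vector_Spaces.linear_compose[OF Suc.IH assms] by (simp add: o_def)
qed

lemma poly_endo_eq_sum:
  assumes "degree p \<le> N"
  shows "poly_endo scale p \<phi> v = (\<Sum>i\<le>N. coeff p i *s (\<phi> ^^ i) v)"
  unfolding poly_endo_def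
  by (rule sum.mono_neutral_left) (use assms in \<open>auto simp: coeff_eq_0\<close>)

lemma poly_endo_0 [simp]: "poly_endo scale 0 \<phi> v = 0"
  by (simp add: poly_endo_def)

lemma poly_endo_1 [simp]: "poly_endo scale 1 \<phi> v = v"
  by (simp add: poly_endo_def)

lemma poly_endo_add:
  "poly_endo scale (p + q) \<phi> v = poly_endo scale p \<phi> v + poly_endo scale q \<phi> v"
proof -
  let ?N = "max (degree p) (degree q)"
  have "degree (p + q) \<le> ?N" by (rule degree_add_le_max)
  then show ?thesis
    by (simp add: poly_endo_eq_sum[of _ ?N] scale_left_distrib sum.distrib)
qed

lemma poly_endo_smult: "poly_endo scale (smult c p) \<phi> v = c *s poly_endo scale p \<phi> v"
  by (simp add: poly_endo_eq_sum[of _ "degree p"] scale_sum_right)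

lemma poly_endo_monom: "poly_endo scale (monom c n) \<phi> v = c *s (\<phi> ^^ n) v"
proof -
  have "poly_endo scale (monom c n) \<phi> v = (\<Sum>i\<le>n. coeff (monom c n) i *s (\<phi> ^^ i) v)"
    by (rule poly_endo_eq_sum) (simp add: degree_monom_le)
  also have "\<dots> = (\<Sum>i\<le>n. if n = i then c *s (\<phi> ^^ i) v else 0)"
    by (rule sum.cong) (simp_all add: coeff_monom)
  finally show ?thesis by simp
qed

lemma poly_endo_sum:
  "poly_endo scale (\<Sum>i\<in>A. p i) \<phi> v = (\<Sum>i\<in>A. poly_endo scale (p i) \<phi> v)"
  by (induction A rule: infinite_finite_induct) (auto simp: poly_endo_add)

context
  fixes \<phi>
  assumes lin: "Vector_Spaces.linear scale scale \<phi>"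
begin

lemma poly_endo_pCons: "poly_endo scale (pCons a p) \<phi> v = a *s v + \<phi> (poly_endo scale p \<phi> v)"
proof -
  have "poly_endo scale (pCons a p) \<phi> v
      = (\<Sum>i\<le>Suc (degree p). coeff (pCons a p) i *s (\<phi> ^^ i) v)"
    by (rule poly_endo_eq_sum) (simp add: degree_pCons_le)
  also have "\<dots> = a *s v + (\<Sum>i\<le>degree p. coeff p i *s (\<phi> ^^ Suc i) v)"
    by (subst sum.atMost_Suc_shift) simp
  also have "(\<Sum>i\<le>degree p. coeff p i *s (\<phi> ^^ Suc i) v) = \<phi> (poly_endo scale p \<phi> v)"
    by (simp add: poly_endo_def endo.linear_sum[OF lin] endo.linear_scale[OF lin])
  finally show ?thesis .
qed

lemma poly_endo_mult:
  "poly_endo scale (p * q) \<phi> v = poly_endo scale p \<phi> (poly_endo scale q \<phi> v)"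
proof (induction p arbitrary: v rule: pCons_induct)
  case 0
  show ?case by simp
next
  case (pCons a p)
  show ?case
    by (simp add: mult_pCons_left poly_endo_add poly_endo_smult poly_endo_pCons pCons.IH)
qed

lemma poly_endo_X_power: "poly_endo scale ([:0, 1:] ^ m) \<phi> v = (\<phi> ^^ m) v"
proof (induction m arbitrary: v)
  case 0
  show ?case by simp
next
  case (Suc m)
  have X: "poly_endo scale [:0, 1:] \<phi> w = \<phi> w" for w
    by (simp add: poly_endo_pCons endo.linear_0[OF lin])
  show ?case
    by (simp only: power_Suc poly_endo_mult X Suc.IH funpow.simps o_apply)
qed

lemma linear_poly_endo: "Vector_Spaces.linear scale scale (poly_endo scale p \<phi>)"
  unfolding Vector_Spaces.linear_iff poly_endo_def
  using vector_space_axioms endo.linear_add[OF linear_funpow[OF lin]]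
    endo.linear_scale[OF linear_funpow[OF lin]]
  by (auto simp: scale_right_distrib sum.distrib scale_sum_right mult.commute)

lemma poly_endo_commute:
  "poly_endo scale p \<phi> (poly_endo scale q \<phi> v) = poly_endo scale q \<phi> (poly_endo scale p \<phi> v)"
  by (metis poly_endo_mult mult.commute)

lemma poly_endo_funpow_commute:
  "poly_endo scale p \<phi> ((\<phi> ^^ m) v) = (\<phi> ^^ m) (poly_endo scale p \<phi> v)"
  by (metis poly_endo_commute poly_endo_X_power)

lemma poly_endo_bezout_decomposition:
  assumes "coeff p 0 \<noteq> 0"
  obtains a b where
    "\<And>v. v = (\<phi> ^^ m) (poly_endo scale a \<phi> v) + poly_endo scale b \<phi> (poly_endo scale p \<phi> v)"
proof -
  obtain a b where ab: "a * [:0, 1:] ^ m + b * p = 1"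
    using bezout_X_power[OF assms] by blast
  have "v = (\<phi> ^^ m) (poly_endo scale a \<phi> v) + poly_endo scale b \<phi> (poly_endo scale p \<phi> v)" for v
  proof -
    have "v = poly_endo scale (a * [:0, 1:] ^ m + b * p) \<phi> v"
      by (simp add: ab)
    then show ?thesis
      by (simp add: poly_endo_add poly_endo_mult poly_endo_X_power poly_endo_funpow_commute)
  qed
  then show ?thesis by (rule that)
qed

lemma AST_W_subset_range_funpow: "AST_W scale \<phi> \<subseteq> range (\<phi> ^^ m)"
proof
  fix v
  assume "v \<in> AST_W scale \<phi>"
  then obtain p :: "'a poly" where "coprime p [:0, 1:]" and pv: "poly_endo scale p \<phi> v = 0"
    by (auto simp: AST_W_def)
  then obtain a b where
    "v = (\<phi> ^^ m) (poly_endo scale a \<phi> v) + poly_endo scale b \<phi> (poly_endo scale p \<phi> v)"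
    using poly_endo_bezout_decomposition coprime_X_iff_coeff_0 by metis
  then have "v = (\<phi> ^^ m) (poly_endo scale a \<phi> v)"
    by (simp add: pv endo.linear_0[OF linear_poly_endo])
  then show "v \<in> range (\<phi> ^^ m)" by blast
qed

end

lemma nontrivial_relation_in_span:
  assumes "finite B" and span: "\<And>i. i \<le> card B \<Longrightarrow> x i \<in> span B"
  shows "\<exists>c. (\<exists>i\<le>card B. c i \<noteq> 0) \<and> (\<Sum>i\<le>card B. c i *s x i) = 0"
proof (cases "inj_on x {..card B}")
  case False
  then obtain i j where ij: "i \<le> card B" "j \<le> card B" "i \<noteq> j" "x i = x j"
    by (auto simp: inj_on_def)
  define c :: "nat \<Rightarrow> 'a"
    where "c k = (if k = i then 1 else 0) - (if k = j then 1 else 0)" for k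
  have "(\<Sum>k\<le>card B. c k *s x k)
      = (\<Sum>k\<le>card B. if k = i then x k else 0) - (\<Sum>k\<le>card B. if k = j then x k else 0)"
    by (simp add: c_def scale_left_diff_distrib sum_subtractf if_distrib[of "\<lambda>a. a *s _"]
        cong: if_cong)
  also have "\<dots> = 0" using ij by simp
  finally have "(\<Sum>k\<le>card B. c k *s x k) = 0" .
  moreover have "c i \<noteq> 0" using ij by (simp add: c_def)
  ultimately show ?thesis using ij(1) by blast
next
  case True
  define S where "S = x ` {..card B}"
  have "\<not> independent S"
  proof
    assume "independent S"
    moreover have "S \<subseteq> span B" using span by (auto simp: S_def)
    ultimately have "card S \<le> card B"
      using independent_span_bound[OF \<open>finite B\<close>] by blast
    then show False using True by (simp add: S_def card_image)
  qed
  then obtain u where u: "\<exists>v\<in>S. u v \<noteq> 0" "(\<Sum>v\<in>S. u v *s v) = 0"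
    using dependent_finite[of S] by (auto simp: S_def)
  have "(\<Sum>i\<le>card B. u (x i) *s x i) = (\<Sum>v\<in>S. u v *s v)"
    using True by (simp add: S_def sum.reindex)
  then show ?thesis using u by (auto simp: S_def)
qed

lemma exists_poly_annihilating_vector:
  assumes "finite B" and "\<And>i. (\<phi> ^^ i) b \<in> span B"
  shows "\<exists>P. P \<noteq> 0 \<and> poly_endo scale P \<phi> b = 0"
proof -
  obtain c where c: "\<exists>i\<le>card B. c i \<noteq> 0" "(\<Sum>i\<le>card B. c i *s (\<phi> ^^ i) b) = 0"
    using nontrivial_relation_in_span[of B "\<lambda>i. (\<phi> ^^ i) b"] assms by blast
  define P where "P = (\<Sum>i\<le>card B. monom (c i) i)"
  have "coeff P i = c i" if "i \<le> card B" for i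
    using that by (simp add: P_def coeff_sum coeff_monom)
  then have "P \<noteq> 0" using c(1) by force
  moreover have "poly_endo scale P \<phi> b = 0"
    using c(2) by (simp add: P_def poly_endo_sum poly_endo_monom)
  ultimately show ?thesis by blast
qed

lemma finite_potent_annihilating_poly:
  assumes "finite_potent scale \<phi>"
  shows "\<exists>Q. Q \<noteq> 0 \<and> (\<forall>v. poly_endo scale Q \<phi> v = 0)"
proof -
  have lin: "Vector_Spaces.linear scale scale \<phi>"
    using assms by (simp add: finite_potent_def)
  obtain n B where "finite B" and span_B: "span B = range (\<phi> ^^ n)"
    using assms by (auto simp: finite_potent_def fin_dim_subspace_def)
  have orbit: "(\<phi> ^^ i) b \<in> span B" if "b \<in> span B" for i b
  proof -
    from that span_B obtain y where "b = (\<phi> ^^ n) y" by auto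
    then have "(\<phi> ^^ i) b = (\<phi> ^^ n) ((\<phi> ^^ i) y)"
      by (metis add.commute comp_apply funpow_add)
    then show ?thesis using span_B by simp
  qed
  have "\<forall>b\<in>B. \<exists>P. P \<noteq> 0 \<and> poly_endo scale P \<phi> b = 0"
    using exists_poly_annihilating_vector[OF \<open>finite B\<close> orbit[OF span_base]] by blast
  then obtain P where P: "\<And>b. b \<in> B \<Longrightarrow> P b \<noteq> 0 \<and> poly_endo scale (P b) \<phi> b = 0"
    by metis
  define Q where "Q = (\<Prod>b\<in>B. P b)"
  have "poly_endo scale Q \<phi> b = 0" if "b \<in> B" for b
  proof -
    have "Q = (\<Prod>c\<in>B - {b}. P c) * P b"
      using \<open>finite B\<close> that by (simp add: Q_def prod.remove mult.commute)
    then show ?thesis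
      using P[OF that] by (simp add: poly_endo_mult[OF lin] endo.linear_0[OF linear_poly_endo[OF lin]])
  qed
  then have Q_span: "poly_endo scale Q \<phi> v = 0" if "v \<in> span B" for v
    using endo.linear_eq_0_on_span[OF linear_poly_endo[OF lin]] that by blast
  have "Q * [:0, 1:] ^ n \<noteq> 0"
    using P \<open>finite B\<close> by (simp add: Q_def)
  moreover have "poly_endo scale (Q * [:0, 1:] ^ n) \<phi> v = 0" for v
    using Q_span span_B by (simp add: poly_endo_mult[OF lin] poly_endo_X_power[OF lin])
  ultimately show ?thesis by blast
qed

lemma finite_potent_annihilator_split:
  assumes "finite_potent scale \<phi>"
  obtains s g where "coeff g 0 \<noteq> 0" and "\<And>v. (\<phi> ^^ s) (poly_endo scale g \<phi> v) = 0"
proof -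
  have lin: "Vector_Spaces.linear scale scale \<phi>"
    using assms by (simp add: finite_potent_def)
  obtain Q where "Q \<noteq> 0" and Q: "\<And>v. poly_endo scale Q \<phi> v = 0"
    using finite_potent_annihilating_poly[OF assms] by blast
  then obtain g where Q_eq: "Q = [:0, 1:] ^ order 0 Q * g" and "\<not> [:0, 1:] dvd g"
    using order_decomp[of Q 0] by auto
  then have "coeff g 0 \<noteq> 0"
    by (simp add: dvd_iff_poly_eq_0 poly_0_coeff_0)
  moreover have "(\<phi> ^^ order 0 Q) (poly_endo scale g \<phi> v) = 0" for v
    using Q[of v] by (subst (asm) Q_eq) (simp add: poly_endo_mult[OF lin] poly_endo_X_power[OF lin])
  ultimately show ?thesis by (rule that)
qed

lemma funpow_AST_index_AST_U:
  assumes "finite_potent scale \<phi>" and "v \<in> AST_U \<phi>"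
  shows "(\<phi> ^^ AST_index \<phi>) v = 0"
proof -
  have lin: "Vector_Spaces.linear scale scale \<phi>"
    using assms by (simp add: finite_potent_def)
  obtain s g where g0: "coeff g 0 \<noteq> 0" and g: "\<And>v. (\<phi> ^^ s) (poly_endo scale g \<phi> v) = 0"
    using finite_potent_annihilator_split[OF assms(1)] by blast
  have "(\<phi> ^^ s) u = 0" if "u \<in> AST_U \<phi>" for u
  proof -
    from that obtain m where m: "(\<phi> ^^ m) u = 0" by (auto simp: AST_U_def)
    obtain a b where
      "u = (\<phi> ^^ m) (poly_endo scale a \<phi> u) + poly_endo scale b \<phi> (poly_endo scale g \<phi> u)"
      using poly_endo_bezout_decomposition[OF lin g0] by blast
    also have "(\<phi> ^^ m) (poly_endo scale a \<phi> u) = 0"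
      using m by (simp add: poly_endo_funpow_commute[OF lin, symmetric]
          endo.linear_0[OF linear_poly_endo[OF lin]])
    finally have "(\<phi> ^^ s) u = poly_endo scale b \<phi> ((\<phi> ^^ s) (poly_endo scale g \<phi> u))"
      by (simp add: poly_endo_funpow_commute[OF lin])
    then show ?thesis
      by (simp add: g endo.linear_0[OF linear_poly_endo[OF lin]])
  qed
  then have "\<forall>u\<in>AST_U \<phi>. (\<phi> ^^ (LEAST r. \<forall>u\<in>AST_U \<phi>. (\<phi> ^^ r) u = 0)) u = 0"
    by (intro LeastI[of "\<lambda>r. \<forall>u\<in>AST_U \<phi>. (\<phi> ^^ r) u = 0" s]) blast
  then show ?thesis using assms(2) by (simp add: AST_index_def)
qed

lemma range_funpow_AST_index_subset_AST_W:
  assumes "finite_potent scale \<phi>"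
  shows "range (\<phi> ^^ AST_index \<phi>) \<subseteq> AST_W scale \<phi>"
proof
  fix w
  assume "w \<in> range (\<phi> ^^ AST_index \<phi>)"
  then obtain u where w: "w = (\<phi> ^^ AST_index \<phi>) u" by blast
  have lin: "Vector_Spaces.linear scale scale \<phi>"
    using assms by (simp add: finite_potent_def)
  obtain s g where g0: "coeff g 0 \<noteq> 0" and g: "\<And>v. (\<phi> ^^ s) (poly_endo scale g \<phi> v) = 0"
    using finite_potent_annihilator_split[OF assms] by blast
  have "poly_endo scale g \<phi> u \<in> AST_U \<phi>"
    using g by (auto simp: AST_U_def)
  then have "poly_endo scale g \<phi> w = 0"
    using funpow_AST_index_AST_U[OF assms] by (simp add: w poly_endo_funpow_commute[OF lin])
  then show "w \<in> AST_W scale \<phi>"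
    using g0 coprime_X_iff_coeff_0 by (auto simp: AST_W_def)
qed

lemma AST_U_eq_kernel_funpow_AST_index:
  assumes "finite_potent scale \<phi>"
  shows "AST_U \<phi> = {v. (\<phi> ^^ AST_index \<phi>) v = 0}"
  using funpow_AST_index_AST_U[OF assms] by (auto simp: AST_U_def)

lemma AST_W_eq_range_funpow_AST_index:
  assumes "finite_potent scale \<phi>"
  shows "AST_W scale \<phi> = range (\<phi> ^^ AST_index \<phi>)"
  using assms AST_W_subset_range_funpow range_funpow_AST_index_subset_AST_W
  by (simp add: finite_potent_def subset_antisym)

end

theorem lemma3p2:
  fixes scale :: "'a::field \<Rightarrow> 'b::ab_group_add \<Rightarrow> 'b"
    and \<phi> f :: "'b \<Rightarrow> 'b"
  assumes "vector_space scale"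
    and "finite_potent scale \<phi>"
    and "AST_index \<phi> = r"
    and "Vector_Spaces.linear scale scale f"
    and "f \<circ> (\<phi> ^^ r) = (\<phi> ^^ r) \<circ> f"
  shows "f ` AST_W scale \<phi> \<subseteq> AST_W scale \<phi> \<and> f ` AST_U \<phi> \<subseteq> AST_U \<phi>"
proof -
  interpret vector_space scale by fact
  interpret endo: vector_space_pair scale scale ..
  have comm: "f ((\<phi> ^^ r) v) = (\<phi> ^^ r) (f v)" for v
    using fun_cong[OF assms(5), of v] by simp
  have "f ` range (\<phi> ^^ r) \<subseteq> range (\<phi> ^^ r)"
    by (auto simp: comm)
  moreover have "f ` {v. (\<phi> ^^ r) v = 0} \<subseteq> {v. (\<phi> ^^ r) v = 0}"
    by (auto simp: comm[symmetric] endo.linear_0[OF assms(4)])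
  ultimately show ?thesis
    using assms(2,3) by (simp add: AST_W_eq_range_funpow_AST_index AST_U_eq_kernel_funpow_AST_index)
qed

end
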